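(* Let $\kappa_1,\kappa_2$ be real constants and $F$ a smooth real function of one variable. Consider the equation $$\sigma_{rr}+(\kappa_1+\kappa_2)\frac{\sigma_r}{r}-\kappa_1(1-\kappa_2)\frac{\sigma}{r^2}=\big(F(\sigma)\big)_{tt}$$ for a smooth function $\sigma(r,t)$, $r>0$. Then every smooth solution satisfies the four conservation laws $\partial_r T^r+\partial_t T^t=0$ with $(T^r,T^t)$ given by $$\Big(r^{\kappa_2-1}(r\sigma_r+\kappa_1\sigma),\ -r^{\kappa_2}\sigma_tF'(\sigma)\Big),$$ $$\Big(t\,r^{\kappa_2-1}(r\sigma_r+\kappa_1\sigma),\ r^{\kappa_2}\big(F(\sigma)-t\sigma_tF'(\sigma)\big)\Big),$$ $$\Big(r^{\kappa_1}\big(r\sigma_r-(1-\kappa_2)\sigma\big),\ -r^{1+\kappa_1}\sigma_tF'(\sigma)\Big),$$ $$\Big(t\,r^{\kappa_1}\big(r\sigma_r-(1-\kappa_2)\sigma\big),\ r^{1+\kappa_1}\big(F(\sigma)-t\sigma_tF'(\sigma)\big)\Big),$$ corresponding to the multipliers $r^{\kappa_2}$, $tr^{\kappa_2}$, $r^{1+\kappa_1}$, $tr^{1+\kappa_1}$, respectively.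
   Context: Subscripts denote partial derivatives; $F'$ is the derivative of $F$. *)

theory Defs
  imports "HOL-Analysis.Analysis"
begin

definition pd_r :: "(real \<times> real \<Rightarrow> real) \<Rightarrow> real \<times> real \<Rightarrow> real" where
  "pd_r g = (\<lambda>(r, t). deriv (\<lambda>x. g (x, t)) r)"

definition pd_t :: "(real \<times> real \<Rightarrow> real) \<Rightarrow> real \<times> real \<Rightarrow> real" where
  "pd_t g = (\<lambda>(r, t). deriv (\<lambda>y. g (r, y)) t)"

text \<open>C^k regularity on a set U (intended: open): continuous for k = 0; for k+1,
  (Frechet) differentiable on U with both partial derivatives C^k.\<close>

fun Ck2 :: "nat \<Rightarrow> (real \<times> real) set \<Rightarrow> (real \<times> real \<Rightarrow> real) \<Rightarrow> bool" where
  "Ck2 0 U g = continuous_on U g"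
| "Ck2 (Suc k) U g = (g differentiable_on U \<and> Ck2 k U (pd_r g) \<and> Ck2 k U (pd_t g))"

definition smooth2 :: "(real \<times> real) set \<Rightarrow> (real \<times> real \<Rightarrow> real) \<Rightarrow> bool" where
  "smooth2 U g = (\<forall>k. Ck2 k U g)"

definition smooth1 :: "(real \<Rightarrow> real) \<Rightarrow> bool" where
  "smooth1 F = (\<forall>k. ((deriv ^^ k) F) differentiable_on UNIV)"

end

theory Submission
  imports Defs
begin

text \<open>Each flux pair has the shape
  \<open>T\<^sup>r = m(t) r\<^bsup>b-1\<^esup> (r \<sigma>\<^sub>r + c \<sigma>)\<close> and
  \<open>T\<^sup>t = r\<^sup>b (m' F(\<sigma>) - m(t) \<sigma>\<^sub>t F'(\<sigma>))\<close> with an affine multiplier \<open>m(t) = \<alpha> + \<beta> t\<close>.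
  Then \<open>\<partial>\<^sub>r T\<^sup>r = m(t) r\<^sup>b (\<sigma>\<^sub>r\<^sub>r + (b + c) \<sigma>\<^sub>r / r + (b - 1) c \<sigma> / r\<^sup>2)\<close>
  and, since \<open>m'' = 0\<close>, \<open>\<partial>\<^sub>t T\<^sup>t = - m(t) r\<^sup>b (F(\<sigma>))\<^sub>t\<^sub>t\<close>. The radial operator is the one of
  the equation exactly when \<open>b + c = \<kappa>\<^sub>1 + \<kappa>\<^sub>2\<close> and \<open>(b - 1) c = - \<kappa>\<^sub>1 (1 - \<kappa>\<^sub>2)\<close>, which has the
  two solutions \<open>(b, c) = (\<kappa>\<^sub>2, \<kappa>\<^sub>1)\<close> and \<open>(b, c) = (1 + \<kappa>\<^sub>1, \<kappa>\<^sub>2 - 1)\<close>.\<close>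

lemma has_real_derivative_pd_r:
  assumes "g differentiable_on U" "open U" "(r, t) \<in> U"
  shows "((\<lambda>x. g (x, t)) has_real_derivative pd_r g (r, t)) (at r)"
proof -
  have "g differentiable at (r, t)"
    using assms by (simp add: differentiable_on_eq_differentiable_at)
  then have "(\<lambda>x. g (x, t)) differentiable at r"
    using differentiable_chain_at[of "\<lambda>x. (x, t)" r g] by (simp add: o_def)
  then show ?thesis
    by (simp add: pd_r_def DERIV_deriv_iff_real_differentiable)
qed

lemma has_real_derivative_pd_t:
  assumes "g differentiable_on U" "open U" "(r, t) \<in> U"
  shows "((\<lambda>y. g (r, y)) has_real_derivative pd_t g (r, t)) (at t)"
proof -
  have "g differentiable at (r, t)"
    using assms by (simp add: differentiable_on_eq_differentiable_at)
  then have "(\<lambda>y. g (r, y)) differentiable at t"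
    using differentiable_chain_at[of "\<lambda>y. (r, y)" t g] by (simp add: o_def)
  then show ?thesis
    by (simp add: pd_t_def DERIV_deriv_iff_real_differentiable)
qed

lemma pd_r_eqI: "((\<lambda>x. g (x, t)) has_real_derivative D) (at r) \<Longrightarrow> pd_r g (r, t) = D"
  by (simp add: pd_r_def DERIV_imp_deriv)

lemma pd_t_eqI: "((\<lambda>y. g (r, y)) has_real_derivative D) (at t) \<Longrightarrow> pd_t g (r, t) = D"
  by (simp add: pd_t_def DERIV_imp_deriv)

lemma differentiable_on_UNIV_has_real_derivative:
  "f differentiable_on UNIV \<Longrightarrow> (f has_real_derivative deriv f x) (at x)"
  by (simp add: DERIV_deriv_iff_real_differentiable differentiable_on_def)

lemma pd_t_pd_t_comp:
  assumes F: "F differentiable_on UNIV" "deriv F differentiable_on UNIV"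
    and \<sigma>: "\<sigma> differentiable_on U" "pd_t \<sigma> differentiable_on U"
    and U: "open U" "(r, t) \<in> U"
  shows "pd_t (pd_t (\<lambda>p. F (\<sigma> p))) (r, t)
    = deriv F (\<sigma> (r, t)) * pd_t (pd_t \<sigma>) (r, t) + deriv (deriv F) (\<sigma> (r, t)) * (pd_t \<sigma> (r, t))\<^sup>2"
proof -
  let ?S = "{y. (r, y) \<in> U}"
  have "open ?S"
    using continuous_open_vimage[OF U(1), of "\<lambda>y. (r, y)"] by (simp add: vimage_def)
  have pd_t_comp: "pd_t (\<lambda>p. F (\<sigma> p)) (r, y) = deriv F (\<sigma> (r, y)) * pd_t \<sigma> (r, y)"
    if "y \<in> ?S" for y
    using DERIV_chain2[OF differentiable_on_UNIV_has_real_derivative[OF F(1)]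
        has_real_derivative_pd_t[OF \<sigma>(1) U(1)]] that
    by (intro pd_t_eqI) simp
  have "((\<lambda>y. deriv F (\<sigma> (r, y)) * pd_t \<sigma> (r, y)) has_real_derivative
      deriv F (\<sigma> (r, t)) * pd_t (pd_t \<sigma>) (r, t)
      + deriv (deriv F) (\<sigma> (r, t)) * (pd_t \<sigma> (r, t))\<^sup>2) (at t)"
    using DERIV_mult'[OF DERIV_chain2[OF differentiable_on_UNIV_has_real_derivative[OF F(2)]
          has_real_derivative_pd_t[OF \<sigma>(1) U]] has_real_derivative_pd_t[OF \<sigma>(2) U]]
    by (simp add: power2_eq_square mult.assoc)
  then have "((\<lambda>y. pd_t (\<lambda>p. F (\<sigma> p)) (r, y)) has_real_derivative
      deriv F (\<sigma> (r, t)) * pd_t (pd_t \<sigma>) (r, t)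
      + deriv (deriv F) (\<sigma> (r, t)) * (pd_t \<sigma> (r, t))\<^sup>2) (at t)"
    by (rule has_field_derivative_transform_within_open[OF _ \<open>open ?S\<close>])
      (use U(2) pd_t_comp in simp_all)
  then show ?thesis
    by (rule pd_t_eqI)
qed

lemma pd_r_radial_flux:
  assumes \<sigma>: "\<sigma> differentiable_on U" "pd_r \<sigma> differentiable_on U"
    and U: "open U" "(r, t) \<in> U" and "r > 0"
  shows "pd_r (\<lambda>(r, t). m t * r powr (b - 1) * (r * pd_r \<sigma> (r, t) + c * \<sigma> (r, t))) (r, t)
    = m t * r powr b * (pd_r (pd_r \<sigma>) (r, t) + (b + c) * pd_r \<sigma> (r, t) / r
        + (b - 1) * c * \<sigma> (r, t) / r\<^sup>2)"
proof -
  have "((\<lambda>x. m t * x powr (b - 1) * (x * pd_r \<sigma> (x, t) + c * \<sigma> (x, t))) has_real_derivative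
      m t * ((b - 1) * r powr (b - 1 - 1)) * (r * pd_r \<sigma> (r, t) + c * \<sigma> (r, t))
      + (1 * pd_r \<sigma> (r, t) + pd_r (pd_r \<sigma>) (r, t) * r + c * pd_r \<sigma> (r, t)) * (m t * r powr (b - 1)))
      (at r)"
    by (intro DERIV_mult DERIV_cmult DERIV_add DERIV_ident has_real_derivative_powr \<open>r > 0\<close>
        has_real_derivative_pd_r[OF \<sigma>(1) U] has_real_derivative_pd_r[OF \<sigma>(2) U])
  then have "pd_r (\<lambda>(r, t). m t * r powr (b - 1) * (r * pd_r \<sigma> (r, t) + c * \<sigma> (r, t))) (r, t)
      = m t * ((b - 1) * r powr (b - 1 - 1)) * (r * pd_r \<sigma> (r, t) + c * \<sigma> (r, t))
      + (1 * pd_r \<sigma> (r, t) + pd_r (pd_r \<sigma>) (r, t) * r + c * pd_r \<sigma> (r, t)) * (m t * r powr (b - 1))"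
    by (intro pd_r_eqI) simp
  also have "\<dots> = m t * r powr b * (pd_r (pd_r \<sigma>) (r, t) + (b + c) * pd_r \<sigma> (r, t) / r
        + (b - 1) * c * \<sigma> (r, t) / r\<^sup>2)"
  proof -
    have powr_b: "r powr (b - 1) = r powr b / r" "r powr (b - 1 - 1) = r powr b / r\<^sup>2"
      using \<open>r > 0\<close> by (simp_all add: powr_diff power2_eq_square)
    show ?thesis
      unfolding powr_b using \<open>r > 0\<close> by (simp add: field_simps power2_eq_square)
  qed
  finally show ?thesis .
qed

lemma pd_t_time_flux:
  assumes F: "F differentiable_on UNIV" "deriv F differentiable_on UNIV"
    and \<sigma>: "\<sigma> differentiable_on U" "pd_t \<sigma> differentiable_on U"
    and U: "open U" "(r, t) \<in> U"
  shows "pd_t (\<lambda>(r, t). w r * (\<beta> * F (\<sigma> (r, t))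
      - (\<alpha> + \<beta> * t) * pd_t \<sigma> (r, t) * deriv F (\<sigma> (r, t)))) (r, t)
    = - ((\<alpha> + \<beta> * t) * w r * pd_t (pd_t (\<lambda>p. F (\<sigma> p))) (r, t))"
proof -
  let ?s = "\<sigma> (r, t)" and ?s\<^sub>t = "pd_t \<sigma> (r, t)" and ?s\<^sub>t\<^sub>t = "pd_t (pd_t \<sigma>) (r, t)"
  have F_\<sigma>: "((\<lambda>y. F (\<sigma> (r, y))) has_real_derivative deriv F ?s * ?s\<^sub>t) (at t)"
    using DERIV_chain2[OF differentiable_on_UNIV_has_real_derivative[OF F(1)]
        has_real_derivative_pd_t[OF \<sigma>(1) U]] .
  have F'_\<sigma>: "((\<lambda>y. deriv F (\<sigma> (r, y))) has_real_derivative deriv (deriv F) ?s * ?s\<^sub>t) (at t)"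
    using DERIV_chain2[OF differentiable_on_UNIV_has_real_derivative[OF F(2)]
        has_real_derivative_pd_t[OF \<sigma>(1) U]] .
  have affine: "((\<lambda>y. \<alpha> + \<beta> * y) has_real_derivative \<beta>) (at t)"
    using DERIV_add[OF DERIV_const DERIV_cmult[OF DERIV_ident]] by simp
  have "pd_t (\<lambda>(r, t). w r * (\<beta> * F (\<sigma> (r, t))
      - (\<alpha> + \<beta> * t) * pd_t \<sigma> (r, t) * deriv F (\<sigma> (r, t)))) (r, t)
    = w r * (\<beta> * (deriv F ?s * ?s\<^sub>t) - ((\<beta> * ?s\<^sub>t + ?s\<^sub>t\<^sub>t * (\<alpha> + \<beta> * t)) * deriv F ?s
        + deriv (deriv F) ?s * ?s\<^sub>t * ((\<alpha> + \<beta> * t) * ?s\<^sub>t)))"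
    by (rule pd_t_eqI) (simp only: prod.case, intro DERIV_cmult DERIV_diff
        DERIV_mult[OF DERIV_mult[OF affine has_real_derivative_pd_t[OF \<sigma>(2) U]] F'_\<sigma>] F_\<sigma>)
  also have "\<dots> = - ((\<alpha> + \<beta> * t) * w r * pd_t (pd_t (\<lambda>p. F (\<sigma> p))) (r, t))"
    unfolding pd_t_pd_t_comp[OF F \<sigma> U] by (simp add: algebra_simps power2_eq_square)
  finally show ?thesis .
qed

lemma conservation_law:
  fixes k1 k2 b c \<alpha> \<beta> :: real
  assumes F: "F differentiable_on UNIV" "deriv F differentiable_on UNIV"
    and \<sigma>: "Ck2 2 {p. fst p > 0} \<sigma>"
    and eq: "\<And>r t. r > 0 \<Longrightarrow>
      pd_r (pd_r \<sigma>) (r, t) + (k1 + k2) * pd_r \<sigma> (r, t) / r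
        - k1 * (1 - k2) * \<sigma> (r, t) / r ^ 2
      = pd_t (pd_t (\<lambda>p. F (\<sigma> p))) (r, t)"
    and bc: "b + c = k1 + k2" "(b - 1) * c = - (k1 * (1 - k2))"
    and "r > 0"
  shows "pd_r (\<lambda>(r, t). (\<alpha> + \<beta> * t) * r powr (b - 1) * (r * pd_r \<sigma> (r, t) + c * \<sigma> (r, t))) (r, t)
     + pd_t (\<lambda>(r, t). r powr b * (\<beta> * F (\<sigma> (r, t))
         - (\<alpha> + \<beta> * t) * pd_t \<sigma> (r, t) * deriv F (\<sigma> (r, t)))) (r, t) = 0"
proof -
  let ?U = "{p :: real \<times> real. fst p > 0}"
  have U: "open ?U" "(r, t) \<in> ?U"
    using \<open>r > 0\<close> by (auto intro!: open_Collect_less continuous_intros)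
  have \<sigma>_diff: "\<sigma> differentiable_on ?U" "pd_r \<sigma> differentiable_on ?U" "pd_t \<sigma> differentiable_on ?U"
    using \<sigma> by (simp_all add: numeral_2_eq_2)
  have "pd_r (\<lambda>(r, t). (\<alpha> + \<beta> * t) * r powr (b - 1) * (r * pd_r \<sigma> (r, t) + c * \<sigma> (r, t))) (r, t)
      = (\<alpha> + \<beta> * t) * r powr b * (pd_r (pd_r \<sigma>) (r, t) + (k1 + k2) * pd_r \<sigma> (r, t) / r
          - k1 * (1 - k2) * \<sigma> (r, t) / r ^ 2)"
    unfolding pd_r_radial_flux[OF \<sigma>_diff(1,2) U \<open>r > 0\<close>] bc by simp
  also have "\<dots> = (\<alpha> + \<beta> * t) * r powr b * pd_t (pd_t (\<lambda>p. F (\<sigma> p))) (r, t)"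
    using eq[OF \<open>r > 0\<close>] by simp
  finally show ?thesis
    using pd_t_time_flux[OF F \<sigma>_diff(1,3) U, where w = "\<lambda>r. r powr b"] by simp
qed

theorem mainTheorem2:
  fixes k1 k2 :: real
    and F :: "real \<Rightarrow> real"
    and \<sigma> :: "real \<times> real \<Rightarrow> real"
  assumes F_smooth: "smooth1 F"
    and \<sigma>_smooth: "smooth2 {p. fst p > 0} \<sigma>"
    and eq: "\<And>r t. r > 0 \<Longrightarrow>
      pd_r (pd_r \<sigma>) (r, t) + (k1 + k2) * pd_r \<sigma> (r, t) / r
        - k1 * (1 - k2) * \<sigma> (r, t) / r ^ 2
      = pd_t (pd_t (\<lambda>p. F (\<sigma> p))) (r, t)"
  shows
    "(\<forall>r t. r > 0 \<longrightarrow>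
       pd_r (\<lambda>(r, t). r powr (k2 - 1) * (r * pd_r \<sigma> (r, t) + k1 * \<sigma> (r, t))) (r, t)
     + pd_t (\<lambda>(r, t). - (r powr k2 * pd_t \<sigma> (r, t) * deriv F (\<sigma> (r, t)))) (r, t) = 0)
   \<and> (\<forall>r t. r > 0 \<longrightarrow>
       pd_r (\<lambda>(r, t). t * r powr (k2 - 1) * (r * pd_r \<sigma> (r, t) + k1 * \<sigma> (r, t))) (r, t)
     + pd_t (\<lambda>(r, t). r powr k2 * (F (\<sigma> (r, t)) - t * pd_t \<sigma> (r, t) * deriv F (\<sigma> (r, t)))) (r, t) = 0)
   \<and> (\<forall>r t. r > 0 \<longrightarrow>
       pd_r (\<lambda>(r, t). r powr k1 * (r * pd_r \<sigma> (r, t) - (1 - k2) * \<sigma> (r, t))) (r, t)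
     + pd_t (\<lambda>(r, t). - (r powr (1 + k1) * pd_t \<sigma> (r, t) * deriv F (\<sigma> (r, t)))) (r, t) = 0)
   \<and> (\<forall>r t. r > 0 \<longrightarrow>
       pd_r (\<lambda>(r, t). t * r powr k1 * (r * pd_r \<sigma> (r, t) - (1 - k2) * \<sigma> (r, t))) (r, t)
     + pd_t (\<lambda>(r, t). r powr (1 + k1) * (F (\<sigma> (r, t)) - t * pd_t \<sigma> (r, t) * deriv F (\<sigma> (r, t)))) (r, t) = 0)"
proof -
  have F: "F differentiable_on UNIV" "deriv F differentiable_on UNIV"
    using F_smooth[unfolded smooth1_def, rule_format, of 0] F_smooth[unfolded smooth1_def, rule_format, of 1]
    by simp_all
  have \<sigma>: "Ck2 2 {p. fst p > 0} \<sigma>"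
    using \<sigma>_smooth unfolding smooth2_def ..
  note law = conservation_law[OF F \<sigma> eq]
  show ?thesis
    using law[where b = k2 and c = k1 and \<alpha> = 1 and \<beta> = 0]
      law[where b = k2 and c = k1 and \<alpha> = 0 and \<beta> = 1]
      law[where b = "1 + k1" and c = "k2 - 1" and \<alpha> = 1 and \<beta> = 0]
      law[where b = "1 + k1" and c = "k2 - 1" and \<alpha> = 0 and \<beta> = 1]
    by (simp add: algebra_simps)
qed

end
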